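(* Assume $\mathsf{MA}(\sigma\text{-centered})$. Let $\kappa<\mathfrak{c}$ be a cardinal. Suppose that $A_\alpha$ and $B_\alpha$ are countable dense subsets of $2^\omega$ for each $\alpha<\kappa$, and that $A_\alpha\cap A_\beta=\varnothing$ and $B_\alpha\cap B_\beta=\varnothing$ whenever $\alpha<\beta<\kappa$. Then there exists a homeomorphism $f:2^\omega\to 2^\omega$ such that $f[A_\alpha]=B_\alpha$ for every $\alpha<\kappa$.
   Context: $2^\omega$ is the Cantor set. $\mathsf{MA}(\sigma\text{-centered})$ is Martin's Axiom restricted to $\sigma$-centered posets: for every $\sigma$-centered poset and every family of fewer than $\mathfrak{c}$ dense subsets of it there is a filter meeting all of them. *)

theory Defs
  imports "HOL-Analysis.Analysis" "HOL-Library.Equipollence"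
begin

definition cantor_space :: "(nat \<Rightarrow> bool) topology" where
  "cantor_space = product_topology (\<lambda>_. discrete_topology (UNIV :: bool set)) (UNIV :: nat set)"

text \<open>A set of size continuum (2^omega itself), used to express cardinalities below c.\<close>
abbreviation continuum_set :: "(nat \<Rightarrow> bool) set" where
  "continuum_set \<equiv> UNIV"

text \<open>Forcing notions: a poset (P, le), le p q meaning p is stronger than q.\<close>
definition centered :: "'a set \<Rightarrow> ('a \<Rightarrow> 'a \<Rightarrow> bool) \<Rightarrow> 'a set \<Rightarrow> bool" where
  "centered P le C \<longleftrightarrow> C \<subseteq> P \<and>
     (\<forall>F. finite F \<and> F \<subseteq> C \<longrightarrow> (\<exists>r\<in>P. \<forall>q\<in>F. le r q))"

definition sigma_centered :: "'a set \<Rightarrow> ('a \<Rightarrow> 'a \<Rightarrow> bool) \<Rightarrow> bool" where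
  "sigma_centered P le \<longleftrightarrow> (\<exists>C :: nat \<Rightarrow> 'a set. P = (\<Union>n. C n) \<and> (\<forall>n. centered P le (C n)))"

definition dense_in_poset :: "'a set \<Rightarrow> ('a \<Rightarrow> 'a \<Rightarrow> bool) \<Rightarrow> 'a set \<Rightarrow> bool" where
  "dense_in_poset P le D \<longleftrightarrow> D \<subseteq> P \<and> (\<forall>p\<in>P. \<exists>d\<in>D. le d p)"

definition poset_filter :: "'a set \<Rightarrow> ('a \<Rightarrow> 'a \<Rightarrow> bool) \<Rightarrow> 'a set \<Rightarrow> bool" where
  "poset_filter P le G \<longleftrightarrow> G \<subseteq> P \<and> G \<noteq> {} \<and>
     (\<forall>p\<in>G. \<forall>q\<in>P. le p q \<longrightarrow> q \<in> G) \<and>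
     (\<forall>p\<in>G. \<forall>q\<in>G. \<exists>r\<in>G. le r p \<and> le r q)"

text \<open>MA(sigma-centered), for (nonempty) posets whose underlying set is a subset of
  a fixed set of size continuum (here: sets of naturals).\<close>
definition MA_sigma_centered :: bool where
  "MA_sigma_centered \<longleftrightarrow>
    (\<forall>(P :: nat set set) le. P \<noteq> {} \<and> partial_order_on P {(p, q). p \<in> P \<and> q \<in> P \<and> le p q}
        \<and> sigma_centered P le \<longrightarrow>
      (\<forall>\<D>. \<D> \<prec> continuum_set \<and> (\<forall>D\<in>\<D>. dense_in_poset P le D) \<longrightarrow>
         (\<exists>G. poset_filter P le G \<and> (\<forall>D\<in>\<D>. G \<inter> D \<noteq> {}))))"

end

theory Submission
  imports Defs
begin

text \<open>
  The homeomorphism is obtained by forcing with finite approximations. A condition consists of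
  a level \<open>n\<close>, a permutation of the \<open>2^n\<close> cylinders of that level, and finitely many promised
  pairs \<open>x \<mapsto> y\<close> with \<open>x \<in> A \<alpha>\<close> and \<open>y \<in> B \<alpha>\<close>, forming a partial bijection that the permutation
  respects and whose points lie in distinct cylinders. A stronger condition refines the
  permutation to a higher level and keeps more promises. Conditions agreeing on their level,
  their permutation and the indices of their promised points in fixed enumerations of the
  countable sets have a common extension, so the forcing is \<open>\<sigma>\<close>-centered. A filter meeting the
  fewer than continuum many dense sets asking for high levels and for every point of every
  \<open>A \<alpha>\<close> and \<open>B \<alpha>\<close> to be paired yields coherent permutations at unbounded levels; their limit is
  a homeomorphism keeping all promises.
\<close>

section \<open>Prefixes and cylinders of the Cantor space\<close>

definition cantor_prefix :: "nat \<Rightarrow> (nat \<Rightarrow> bool) \<Rightarrow> bool list" where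
  "cantor_prefix n x = map x [0..<n]"

definition bitstrings :: "nat \<Rightarrow> bool list set" where
  "bitstrings n = {s. length s = n}"

lemma mem_bitstrings [simp]: "s \<in> bitstrings n \<longleftrightarrow> length s = n"
  by (simp add: bitstrings_def)

lemma finite_bitstrings: "finite (bitstrings n)"
  using finite_lists_length_eq[of "UNIV :: bool set" n] by (simp add: bitstrings_def)

lemma length_cantor_prefix [simp]: "length (cantor_prefix n x) = n"
  by (simp add: cantor_prefix_def)

lemma take_cantor_prefix [simp]: "m \<le> n \<Longrightarrow> take m (cantor_prefix n x) = cantor_prefix m x"
  by (simp add: cantor_prefix_def take_map)

lemma nth_cantor_prefix [simp]: "j < n \<Longrightarrow> cantor_prefix n x ! j = x j"
  by (simp add: cantor_prefix_def)

lemma cantor_prefix_eq_iff: "cantor_prefix n x = cantor_prefix n y \<longleftrightarrow> (\<forall>j<n. x j = y j)"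
  by (auto simp: cantor_prefix_def)

lemma cantor_eqI:
  assumes "\<And>j. \<exists>m>j. cantor_prefix m x = cantor_prefix m y"
  shows "x = y"
proof
  fix j
  obtain m where "j < m" "cantor_prefix m x = cantor_prefix m y"
    using assms by blast
  then show "x j = y j"
    by (simp add: cantor_prefix_eq_iff)
qed

lemma eventually_inj_on_cantor_prefix:
  assumes "finite S"
  shows "eventually (\<lambda>m. inj_on (cantor_prefix m) S) sequentially"
proof -
  have "eventually (\<lambda>m. cantor_prefix m x = cantor_prefix m y \<longrightarrow> x = y) sequentially" for x y
  proof (cases "x = y")
    case False
    then obtain j where "x j \<noteq> y j"
      by auto
    then show ?thesis
      by (intro eventually_sequentiallyI[of "Suc j"]) (auto simp: cantor_prefix_eq_iff)
  qed simp
  then have "eventually (\<lambda>m. \<forall>(x, y) \<in> S \<times> S. cantor_prefix m x = cantor_prefix m y \<longrightarrow> x = y)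
      sequentially"
    using assms by (intro eventually_ball_finite) auto
  then show ?thesis
    by (rule eventually_mono) (auto simp: inj_on_def)
qed

lemma topspace_cantor_space [simp]: "topspace cantor_space = UNIV"
  by (simp add: cantor_space_def)

lemma openin_cantor_space_coordinate: "openin cantor_space {x. x j = b}"
proof -
  have "openin cantor_space {x \<in> topspace cantor_space. x j \<in> {b}}"
    unfolding cantor_space_def
    by (rule openin_continuous_map_preimage[OF continuous_map_product_projection]) auto
  then show ?thesis
    by simp
qed

lemma openin_cantor_cylinder: "openin cantor_space {x. cantor_prefix n x = s}"
proof (induction n arbitrary: s)
  case 0
  then show ?case
    by (cases "s = []") (auto simp: cantor_prefix_def simp flip: topspace_cantor_space)
next
  case (Suc n)
  have "{x. cantor_prefix (Suc n) x = s}
      = (if length s = Suc n then {x. cantor_prefix n x = take n s} \<inter> {x. x n = s ! n} else {})"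
    by (auto simp: cantor_prefix_def list_eq_iff_nth_eq nth_append less_Suc_eq)
  then show ?case
    using Suc openin_cantor_space_coordinate by (simp add: openin_Int)
qed

lemma t1_space_cantor_space: "t1_space cantor_space"
  unfolding cantor_space_def
  by (intro Hausdorff_imp_t1_space) (simp add: Hausdorff_space_product_topology)

lemma infinite_cantor_cylinder:
  assumes "length s = n"
  shows "infinite {x. cantor_prefix n x = s}"
proof -
  define z where "z k = (\<lambda>j. if j < n then s ! j else j = n + k)" for k
  have "inj z"
    by (auto simp: inj_def z_def fun_eq_iff)
  moreover have "range z \<subseteq> {x. cantor_prefix n x = s}"
    using assms by (auto simp: z_def cantor_prefix_def list_eq_iff_nth_eq)
  ultimately show ?thesis
    by (meson finite_imageD finite_subset infinite_UNIV_nat)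
qed

lemma dense_meets_cylinder_outside_finite:
  assumes "cantor_space closure_of D = topspace cantor_space" "finite F" "length s = n"
  shows "\<exists>z\<in>D. cantor_prefix n z = s \<and> z \<notin> F"
proof -
  have "openin cantor_space ({x. cantor_prefix n x = s} - F)"
    using t1_space_cantor_space assms(2)
    by (intro openin_diff openin_cantor_cylinder) (simp add: t1_space_closedin_finite)
  moreover have "{x. cantor_prefix n x = s} - F \<noteq> {}"
    using infinite_cantor_cylinder[OF assms(3)] assms(2) by (metis Diff_eq_empty_iff finite_subset)
  ultimately have "D \<inter> ({x. cantor_prefix n x = s} - F) \<noteq> {}"
    using assms(1) dense_intersects_open by blast
  then show ?thesis
    by blast
qed

lemma continuous_map_cantor_space_if_finitary:
  assumes "\<And>j. \<exists>m g. \<forall>x. F x j = g (cantor_prefix m x)"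
  shows "continuous_map cantor_space cantor_space F"
proof -
  have "continuous_map cantor_space (discrete_topology UNIV) (\<lambda>x. F x j)" for j
  proof -
    obtain m g where F: "\<And>x. F x j = g (cantor_prefix m x)"
      using assms by blast
    have "{x. F x j \<in> U} = (\<Union>s\<in>{s. g s \<in> U}. {x. cantor_prefix m x = s})" for U
      by (auto simp: F)
    then have "openin cantor_space {x. F x j \<in> U}" for U
      by (auto intro: openin_cantor_cylinder)
    then show ?thesis
      by (simp add: continuous_map_def)
  qed
  then show ?thesis
    by (simp add: cantor_space_def continuous_map_componentwise_UNIV)
qed

section \<open>Refining permutations of bit strings\<close>

lemma length_permutes_bitstrings:
  assumes "\<pi> permutes bitstrings n"
  shows "length (\<pi> t) = length t"
  using permutes_in_image[OF assms, of t] permutes_not_in[OF assms, of t] by fastforce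

definition refines :: "nat \<Rightarrow> (bool list \<Rightarrow> bool list) \<Rightarrow> nat \<Rightarrow> (bool list \<Rightarrow> bool list) \<Rightarrow> bool" where
  "refines m \<sigma> n \<pi> \<longleftrightarrow> n \<le> m \<and> (\<forall>t\<in>bitstrings m. take n (\<sigma> t) = \<pi> (take n t))"

lemma refines_refl: "\<pi> permutes bitstrings n \<Longrightarrow> refines n \<pi> n \<pi>"
  by (simp add: refines_def length_permutes_bitstrings)

lemma refines_trans:
  assumes "refines m \<sigma> n \<pi>" "refines n \<pi> k \<rho>"
  shows "refines m \<sigma> k \<rho>"
proof -
  have "k \<le> n" "n \<le> m"
    using assms by (simp_all add: refines_def)
  have "take k (\<sigma> t) = \<rho> (take k t)" if t: "t \<in> bitstrings m" for t
  proof -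
    have "take k (\<sigma> t) = take k (take n (\<sigma> t))"
      using \<open>k \<le> n\<close> by (simp add: min_absorb1)
    also have "\<dots> = take k (\<pi> (take n t))"
      using assms(1) t by (simp add: refines_def)
    also have "\<dots> = \<rho> (take k t)"
      using assms(2) t \<open>k \<le> n\<close> \<open>n \<le> m\<close> by (simp add: refines_def min_absorb1)
    finally show ?thesis .
  qed
  then show ?thesis
    using \<open>k \<le> n\<close> \<open>n \<le> m\<close> by (simp add: refines_def)
qed

lemma refines_inv:
  assumes \<sigma>: "\<sigma> permutes bitstrings m" and \<pi>: "\<pi> permutes bitstrings n"
    and "refines m \<sigma> n \<pi>"
  shows "refines m (inv \<sigma>) n (inv \<pi>)"
proof -
  have "take n (inv \<sigma> t) = inv \<pi> (take n t)" if "t \<in> bitstrings m" for t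
  proof -
    have "inv \<sigma> t \<in> bitstrings m"
      using that permutes_in_image[OF permutes_inv[OF \<sigma>]] by blast
    then have "take n t = \<pi> (take n (inv \<sigma> t))"
      using assms(3) permutes_inverses(1)[OF \<sigma>] unfolding refines_def by metis
    then show ?thesis
      using permutes_inv_eq[OF \<pi>] by metis
  qed
  then show ?thesis
    using assms(3) by (simp add: refines_def)
qed

definition lift_perm :: "nat \<Rightarrow> nat \<Rightarrow> (bool list \<Rightarrow> bool list) \<Rightarrow> bool list \<Rightarrow> bool list" where
  "lift_perm m n \<pi> t = (if t \<in> bitstrings m then \<pi> (take n t) @ drop n t else t)"

lemma lift_perm_permutes:
  assumes \<pi>: "\<pi> permutes bitstrings n" and "n \<le> m"
  shows "lift_perm m n \<pi> permutes bitstrings m"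
proof (rule bij_imp_permutes)
  have inverse: "lift_perm m n (inv \<rho>) (lift_perm m n \<rho> t) = t"
    if "\<rho> permutes bitstrings n" "length t = m" for \<rho> t
    using that \<open>n \<le> m\<close>
    by (simp add: lift_perm_def length_permutes_bitstrings permutes_inverses)
  have "lift_perm m n \<pi> (lift_perm m n (inv \<pi>) t) = t" if "length t = m" for t
    using inverse[OF permutes_inv[OF \<pi>] that] by (simp add: inv_inv_eq[OF permutes_bij[OF \<pi>]])
  then show "bij_betw (lift_perm m n \<pi>) (bitstrings m) (bitstrings m)"
    using inverse[OF \<pi>] \<pi> permutes_inv[OF \<pi>] \<open>n \<le> m\<close>
    by (intro bij_betw_byWitness[where f' = "lift_perm m n (inv \<pi>)"])
      (auto simp: lift_perm_def length_permutes_bitstrings)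
qed (simp add: lift_perm_def)

lemma refines_lift_perm:
  assumes "\<pi> permutes bitstrings n" "n \<le> m"
  shows "refines m (lift_perm m n \<pi>) n \<pi>"
  using assms by (simp add: refines_def lift_perm_def length_permutes_bitstrings)

lemma key_preserving_permutation_extends:
  assumes "finite R" "R \<subseteq> X \<times> X" "inj_on fst R" "inj_on snd R" "\<forall>(a, b)\<in>R. key a = key b"
  shows "\<exists>\<tau>. \<tau> permutes X \<and> (\<forall>z. key (\<tau> z) = key z) \<and> (\<forall>(a, b)\<in>R. \<tau> a = b)"
  using assms
proof (induction R rule: finite_induct)
  case empty
  show ?case
  proof (intro exI conjI)
    show "id permutes X"
      by (rule permutes_id)
  qed simp_all
next
  case (insert ab R)
  obtain a b where ab: "ab = (a, b)"
    by fastforce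
  have "R \<subseteq> X \<times> X" "inj_on fst R" "inj_on snd R" "\<forall>(a, b)\<in>R. key a = key b"
    using insert.prems by (auto intro: inj_on_subset[OF _ subset_insertI])
  then obtain \<tau> where \<tau>: "\<tau> permutes X" "\<forall>z. key (\<tau> z) = key z" "\<forall>(a, b)\<in>R. \<tau> a = b"
    using insert.IH by blast
  have "a \<in> X" "b \<in> X" "key a = key b"
    using insert.prems ab by auto
  define \<tau>' where "\<tau>' = Transposition.transpose (\<tau> a) b \<circ> \<tau>"
  have "\<tau>' permutes X"
    unfolding \<tau>'_def using \<tau>(1) \<open>a \<in> X\<close> \<open>b \<in> X\<close>
    by (intro permutes_compose permutes_swap_id) (simp_all add: permutes_in_image)
  moreover have "key (\<tau>' z) = key z" for z
  proof -
    have "key (\<tau> a) = key b"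
      using \<tau>(2) \<open>key a = key b\<close> by simp
    then have "key (Transposition.transpose (\<tau> a) b w) = key w" for w
      by (cases "w = \<tau> a"; cases "w = b") simp_all
    then show ?thesis
      using \<tau>(2) by (simp add: \<tau>'_def)
  qed
  moreover have "\<tau>' a' = b'" if "(a', b') \<in> R" for a' b'
  proof -
    have "(a', b') \<noteq> (a, b)"
      using that insert.hyps(2) ab by blast
    then have "a' \<noteq> a" "b' \<noteq> b"
      using inj_onD[OF insert.prems(2), of "(a', b')" "(a, b)"]
        inj_onD[OF insert.prems(3), of "(a', b')" "(a, b)"] that ab by auto
    moreover have "\<tau> a' = b'"
      using \<tau>(3) that by fastforce
    moreover have "\<tau> a' \<noteq> \<tau> a"
      using \<open>a' \<noteq> a\<close> permutes_inj[OF \<tau>(1)] by (auto dest: injD)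
    ultimately show ?thesis
      by (simp add: \<tau>'_def Transposition.transpose_def)
  qed
  moreover have "\<tau>' a = b"
    by (simp add: \<tau>'_def)
  ultimately show ?case
    using ab by (intro exI[of _ \<tau>']) auto
qed

lemma countable_level_permutations: "countable (SIGMA n:UNIV. {\<pi>. \<pi> permutes bitstrings n})"
proof (rule countable_SIGMA)
  show "countable {\<pi>. \<pi> permutes bitstrings n}" for n
    using finite_permutations[OF finite_bitstrings] by (rule countable_finite)
qed simp

lemma inj_on_map_prod_image:
  assumes "inj_on fst R" "inj_on snd R" "inj_on f (fst ` R)" "inj_on g (snd ` R)"
  shows "inj_on fst (map_prod f g ` R)" "inj_on snd (map_prod f g ` R)"
proof -
  have "inj_on (fst \<circ> map_prod f g) R" "inj_on (snd \<circ> map_prod f g) R"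
    using comp_inj_on[OF assms(1,3)] comp_inj_on[OF assms(2,4)] by (simp_all add: comp_def)
  then show "inj_on fst (map_prod f g ` R)" "inj_on snd (map_prod f g ` R)"
    by (simp_all add: inj_on_imageI)
qed

lemma refinement_extending_partial_bijection:
  assumes \<pi>: "\<pi> permutes bitstrings n" and "n \<le> m"
    and R: "R \<subseteq> bitstrings m \<times> bitstrings m" "inj_on fst R" "inj_on snd R"
    and compatible: "\<forall>(s, t)\<in>R. \<pi> (take n s) = take n t"
  shows "\<exists>\<sigma>. \<sigma> permutes bitstrings m \<and> refines m \<sigma> n \<pi> \<and> (\<forall>(s, t)\<in>R. \<sigma> s = t)"
proof -
  define L where "L = lift_perm m n \<pi>"
  have L: "L permutes bitstrings m" "refines m L n \<pi>"
    unfolding L_def using \<pi> \<open>n \<le> m\<close> by (simp_all add: lift_perm_permutes refines_lift_perm)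
  define R' where "R' = map_prod L id ` R"
  have "finite R'"
    using finite_subset[OF R(1)] finite_bitstrings by (simp add: R'_def)
  moreover have "R' \<subseteq> bitstrings m \<times> bitstrings m"
    using R(1) permutes_in_image[OF L(1)] by (auto simp: R'_def)
  moreover have "inj_on fst R'" "inj_on snd R'"
    unfolding R'_def using inj_on_map_prod_image[OF R(2,3) permutes_inj_on[OF L(1)] inj_on_id] .
  moreover have "\<forall>(a, b)\<in>R'. take n a = take n b"
  proof (clarsimp simp: R'_def)
    fix s t
    assume st: "(s, t) \<in> R"
    then have "s \<in> bitstrings m"
      using R(1) by blast
    then have "take n (L s) = \<pi> (take n s)"
      using L(2) by (simp add: refines_def)
    also have "\<dots> = take n t"
      using compatible st by blast
    finally show "take n (L s) = take n t" .
  qed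
  ultimately obtain \<tau> where \<tau>: "\<tau> permutes bitstrings m" "\<forall>z. take n (\<tau> z) = take n z"
    "\<forall>(a, b)\<in>R'. \<tau> a = b"
    using key_preserving_permutation_extends[of R' "bitstrings m" "take n"] by blast
  have "\<tau> \<circ> L permutes bitstrings m"
    using L(1) \<tau>(1) by (rule permutes_compose)
  moreover have "refines m (\<tau> \<circ> L) n \<pi>"
    using L(2) \<tau>(2) by (simp add: refines_def)
  moreover have "\<forall>(s, t)\<in>R. (\<tau> \<circ> L) s = t"
    using \<tau>(3) by (auto simp: R'_def)
  ultimately show ?thesis
    by blast
qed

lemma separating_refinement_exists:
  assumes \<pi>: "\<pi> permutes bitstrings n"
    and H: "finite H" "inj_on fst H" "inj_on snd H"
    and compatible: "\<forall>(x, y)\<in>H. \<pi> (cantor_prefix n x) = cantor_prefix n y"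
  shows "\<exists>m \<sigma>. k \<le> m \<and> \<sigma> permutes bitstrings m \<and> refines m \<sigma> n \<pi>
    \<and> (\<forall>(x, y)\<in>H. \<sigma> (cantor_prefix m x) = cantor_prefix m y)
    \<and> inj_on (cantor_prefix m) (Domain H)"
proof -
  have "finite (Domain H \<union> Range H)"
    using H by (simp add: finite_Domain finite_Range)
  then obtain N where "\<forall>m\<ge>N. inj_on (cantor_prefix m) (Domain H \<union> Range H)"
    using eventually_inj_on_cantor_prefix unfolding eventually_sequentially by blast
  moreover define m where "m = max N (max n k)"
  ultimately have sep: "inj_on (cantor_prefix m) (Domain H \<union> Range H)"
    by simp
  have m: "n \<le> m" "k \<le> m"
    by (simp_all add: m_def)
  define R where "R = map_prod (cantor_prefix m) (cantor_prefix m) ` H"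
  have "inj_on (cantor_prefix m) (fst ` H)" "inj_on (cantor_prefix m) (snd ` H)"
    using inj_on_subset[OF sep] by (auto simp: fst_eq_Domain snd_eq_Range)
  then have "inj_on fst R" "inj_on snd R"
    unfolding R_def using inj_on_map_prod_image[OF H(2,3)] by simp_all
  moreover have "R \<subseteq> bitstrings m \<times> bitstrings m"
    by (auto simp: R_def)
  moreover have "\<forall>(s, t)\<in>R. \<pi> (take n s) = take n t"
  proof (clarsimp simp: R_def m(1))
    fix x y
    assume "(x, y) \<in> H"
    then show "\<pi> (cantor_prefix n x) = cantor_prefix n y"
      using compatible by blast
  qed
  ultimately obtain \<sigma> where \<sigma>: "\<sigma> permutes bitstrings m" "refines m \<sigma> n \<pi>"
    "\<forall>(s, t)\<in>R. \<sigma> s = t"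
    using refinement_extending_partial_bijection[OF \<pi> m(1)] by blast
  moreover have "\<forall>(x, y)\<in>H. \<sigma> (cantor_prefix m x) = cantor_prefix m y"
    using \<sigma>(3) by (auto simp: R_def)
  moreover have "inj_on (cantor_prefix m) (Domain H)"
    using sep by (rule inj_on_subset) blast
  ultimately show ?thesis
    using m(2) by blast
qed

lemma coherent_approximations_limit:
  fixes lv :: "'a \<Rightarrow> nat" and \<phi> :: "'a \<Rightarrow> bool list \<Rightarrow> bool list"
  assumes unbounded: "\<And>j. \<exists>p\<in>G. j < lv p"
    and directed: "\<And>p q. p \<in> G \<Longrightarrow> q \<in> G \<Longrightarrow>
      \<exists>r\<in>G. refines (lv r) (\<phi> r) (lv p) (\<phi> p) \<and> refines (lv r) (\<phi> r) (lv q) (\<phi> q)"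
    and length_preserving: "\<And>p t. p \<in> G \<Longrightarrow> length (\<phi> p t) = length t"
  shows "\<exists>F. continuous_map cantor_space cantor_space F
    \<and> (\<forall>p\<in>G. \<forall>x. cantor_prefix (lv p) (F x) = \<phi> p (cantor_prefix (lv p) x))"
proof -
  have "\<forall>j. \<exists>p. p \<in> G \<and> j < lv p"
    using unbounded by blast
  then obtain P where "\<forall>j. P j \<in> G \<and> j < lv (P j)"
    by metis
  then have P: "P j \<in> G" "j < lv (P j)" for j
    by simp_all
  define F where "F x j = \<phi> (P j) (cantor_prefix (lv (P j)) x) ! j" for x j
  have nth_agree: "\<phi> p (cantor_prefix (lv p) x) ! j = \<phi> q (cantor_prefix (lv q) x) ! j"
    if pq: "p \<in> G" "q \<in> G" and j: "j < lv p" "j < lv q" for p q x j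
  proof -
    obtain r where "refines (lv r) (\<phi> r) (lv p) (\<phi> p)" "refines (lv r) (\<phi> r) (lv q) (\<phi> q)"
      using directed[OF pq] by blast
    then have "\<phi> p (cantor_prefix (lv p) x) = take (lv p) (\<phi> r (cantor_prefix (lv r) x))"
      "\<phi> q (cantor_prefix (lv q) x) = take (lv q) (\<phi> r (cantor_prefix (lv r) x))"
      by (simp_all add: refines_def)
    then show ?thesis
      using j by simp
  qed
  have F_prefix: "cantor_prefix (lv p) (F x) = \<phi> p (cantor_prefix (lv p) x)" if p: "p \<in> G" for p x
  proof (rule nth_equalityI)
    show "length (cantor_prefix (lv p) (F x)) = length (\<phi> p (cantor_prefix (lv p) x))"
      using length_preserving[OF p] by simp
    fix j
    assume "j < length (cantor_prefix (lv p) (F x))"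
    then have j: "j < lv p"
      by simp
    have "F x j = \<phi> p (cantor_prefix (lv p) x) ! j"
      unfolding F_def by (rule nth_agree[OF P(1) p P(2) j])
    then show "cantor_prefix (lv p) (F x) ! j = \<phi> p (cantor_prefix (lv p) x) ! j"
      using j by simp
  qed
  have "continuous_map cantor_space cantor_space F"
  proof (rule continuous_map_cantor_space_if_finitary)
    show "\<exists>m g. \<forall>x. F x j = g (cantor_prefix m x)" for j
      by (intro exI[of _ "lv (P j)"] exI[of _ "\<lambda>s. \<phi> (P j) s ! j"]) (simp add: F_def)
  qed
  then show ?thesis
    using F_prefix by blast
qed

lemma coherent_permutations_homeomorphism:
  fixes lv :: "'a \<Rightarrow> nat" and \<phi> :: "'a \<Rightarrow> bool list \<Rightarrow> bool list"
  assumes unbounded: "\<And>j. \<exists>p\<in>G. j < lv p"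
    and directed: "\<And>p q. p \<in> G \<Longrightarrow> q \<in> G \<Longrightarrow>
      \<exists>r\<in>G. refines (lv r) (\<phi> r) (lv p) (\<phi> p) \<and> refines (lv r) (\<phi> r) (lv q) (\<phi> q)"
    and perms: "\<And>p. p \<in> G \<Longrightarrow> \<phi> p permutes bitstrings (lv p)"
  shows "\<exists>F. homeomorphic_map cantor_space cantor_space F
    \<and> (\<forall>p\<in>G. \<forall>x. cantor_prefix (lv p) (F x) = \<phi> p (cantor_prefix (lv p) x))"
proof -
  have length_\<phi>: "length (\<phi> p t) = length t" "length (inv (\<phi> p) t) = length t" if "p \<in> G" for p t
    using perms[OF that] permutes_inv[OF perms[OF that]]
    by (simp_all add: length_permutes_bitstrings)
  obtain F where F: "continuous_map cantor_space cantor_space F"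
    "\<forall>p\<in>G. \<forall>x. cantor_prefix (lv p) (F x) = \<phi> p (cantor_prefix (lv p) x)"
    using coherent_approximations_limit[OF unbounded directed length_\<phi>(1)] by blast
  have inv_directed: "\<exists>r\<in>G. refines (lv r) (inv (\<phi> r)) (lv p) (inv (\<phi> p))
      \<and> refines (lv r) (inv (\<phi> r)) (lv q) (inv (\<phi> q))" if pq: "p \<in> G" "q \<in> G" for p q
  proof -
    obtain r where r: "r \<in> G"
      "refines (lv r) (\<phi> r) (lv p) (\<phi> p)" "refines (lv r) (\<phi> r) (lv q) (\<phi> q)"
      using directed[OF pq] by blast
    show ?thesis
      using r(1) refines_inv[OF perms[OF r(1)] perms[OF pq(1)] r(2)]
        refines_inv[OF perms[OF r(1)] perms[OF pq(2)] r(3)] by blast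
  qed
  obtain F' where F': "continuous_map cantor_space cantor_space F'"
    "\<forall>p\<in>G. \<forall>x. cantor_prefix (lv p) (F' x) = inv (\<phi> p) (cantor_prefix (lv p) x)"
    using coherent_approximations_limit[OF unbounded inv_directed length_\<phi>(2)] by blast
  have inverse: "cantor_prefix (lv p) (F' (F x)) = cantor_prefix (lv p) x"
    "cantor_prefix (lv p) (F (F' x)) = cantor_prefix (lv p) x" if "p \<in> G" for p x
    using F(2) F'(2) perms[OF that] that by (simp_all add: permutes_inverses)
  have FF': "F' (F x) = x" "F (F' x) = x" for x
  proof -
    have "\<exists>m>j. cantor_prefix m (F' (F x)) = cantor_prefix m x
        \<and> cantor_prefix m (F (F' x)) = cantor_prefix m x" for j
    proof -
      obtain p where "p \<in> G" "j < lv p"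
        using unbounded by blast
      then show ?thesis
        using inverse[of p x] by (intro exI[of _ "lv p"]) simp
    qed
    then show "F' (F x) = x" "F (F' x) = x"
      by (meson cantor_eqI)+
  qed
  have "homeomorphic_map cantor_space cantor_space F"
    unfolding homeomorphic_map_maps homeomorphic_maps_def
    using F(1) F'(1) FF' by (intro exI[of _ F']) simp
  then show ?thesis
    using F(2) by blast
qed

section \<open>Martin's axiom and cardinality bounds\<close>

lemma partial_order_on_Collect_iff:
  "partial_order_on A {(a, b). a \<in> A \<and> b \<in> A \<and> le a b} \<longleftrightarrow>
    (\<forall>a\<in>A. le a a) \<and> (\<forall>a\<in>A. \<forall>b\<in>A. \<forall>c\<in>A. le a b \<longrightarrow> le b c \<longrightarrow> le a c)
    \<and> (\<forall>a\<in>A. \<forall>b\<in>A. le a b \<longrightarrow> le b a \<longrightarrow> a = b)"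
  (is "partial_order_on A ?r \<longleftrightarrow> ?rhs")
proof
  assume "partial_order_on A ?r"
  then have r: "refl_on A ?r" "trans ?r" "antisym ?r"
    by (simp_all add: partial_order_onD)
  show ?rhs
  proof (intro conjI ballI impI)
    show "le a a" if "a \<in> A" for a
      using refl_onD[OF r(1) that] by simp
    show "le a c" if "a \<in> A" "b \<in> A" "c \<in> A" "le a b" "le b c" for a b c
      using transD[OF r(2), of a b c] that by simp
    show "a = b" if "a \<in> A" "b \<in> A" "le a b" "le b a" for a b
      using antisymD[OF r(3), of a b] that by simp
  qed
next
  assume ?rhs
  then have "partial_order_on A (relation_of le A)"
    by (intro partial_order_on_relation_ofI) blast+
  moreover have "relation_of le A = ?r"
    by (auto simp: relation_of_def)
  ultimately show "partial_order_on A ?r"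
    by simp
qed

context
  fixes P :: "'a set" and le :: "'a \<Rightarrow> 'a \<Rightarrow> bool"
    and P' :: "'b set" and le' :: "'b \<Rightarrow> 'b \<Rightarrow> bool" and h :: "'a \<Rightarrow> 'b"
  assumes bij: "bij_betw h P P'"
    and le_iff: "\<And>p q. p \<in> P \<Longrightarrow> q \<in> P \<Longrightarrow> le' (h p) (h q) \<longleftrightarrow> le p q"
begin

lemma iso_image_eq: "h ` P = P'"
  using bij by (simp add: bij_betw_def)

lemma partial_order_on_iso:
  assumes "partial_order_on P {(p, q). p \<in> P \<and> q \<in> P \<and> le p q}"
  shows "partial_order_on P' {(p, q). p \<in> P' \<and> q \<in> P' \<and> le' p q}"
proof -
  from assms have refl: "\<And>a. a \<in> P \<Longrightarrow> le a a"
    and trans: "\<And>a b c. a \<in> P \<Longrightarrow> b \<in> P \<Longrightarrow> c \<in> P \<Longrightarrow> le a b \<Longrightarrow> le b c \<Longrightarrow> le a c"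
    and antisym: "\<And>a b. a \<in> P \<Longrightarrow> b \<in> P \<Longrightarrow> le a b \<Longrightarrow> le b a \<Longrightarrow> a = b"
    unfolding partial_order_on_Collect_iff by blast+
  show ?thesis
    unfolding partial_order_on_Collect_iff iso_image_eq[symmetric] Ball_image_comp o_def
  proof (intro conjI ballI impI)
    fix a
    assume "a \<in> P"
    then show "le' (h a) (h a)"
      using refl le_iff by simp
  next
    fix a b c
    assume "a \<in> P" "b \<in> P" "c \<in> P" "le' (h a) (h b)" "le' (h b) (h c)"
    then show "le' (h a) (h c)"
      using trans[of a b c] le_iff[of a b] le_iff[of b c] le_iff[of a c] by simp
  next
    fix a b
    assume "a \<in> P" "b \<in> P" "le' (h a) (h b)" "le' (h b) (h a)"
    then show "h a = h b"
      using antisym[of a b] le_iff[of a b] le_iff[of b a] by simp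
  qed
qed

lemma sigma_centered_iso:
  assumes "sigma_centered P le"
  shows "sigma_centered P' le'"
proof -
  obtain C :: "nat \<Rightarrow> 'a set" where C: "P = (\<Union>n. C n)" "\<And>n. centered P le (C n)"
    using assms unfolding sigma_centered_def by blast
  have "centered P' le' (h ` C n)" for n
    unfolding centered_def
  proof (intro conjI allI impI)
    have Cn: "C n \<subseteq> P" "\<And>F. finite F \<Longrightarrow> F \<subseteq> C n \<Longrightarrow> \<exists>r\<in>P. \<forall>q\<in>F. le r q"
      using C(2)[of n] by (auto simp: centered_def)
    then show "h ` C n \<subseteq> P'"
      using iso_image_eq by blast
    fix F'
    assume "finite F' \<and> F' \<subseteq> h ` C n"
    then obtain F where F: "finite F" "F \<subseteq> C n" "F' = h ` F"
      by (meson finite_subset_image)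
    then obtain r where "r \<in> P" "\<forall>q\<in>F. le r q"
      using Cn(2) by blast
    then show "\<exists>r'\<in>P'. \<forall>q\<in>F'. le' r' q"
      using F Cn(1) iso_image_eq le_iff by (intro bexI[of _ "h r"]) auto
  qed
  moreover have "P' = (\<Union>n. h ` C n)"
    using C(1) iso_image_eq by blast
  ultimately show ?thesis
    by (auto simp: sigma_centered_def)
qed

lemma dense_in_poset_iso:
  assumes "dense_in_poset P le D"
  shows "dense_in_poset P' le' (h ` D)"
  using assms le_iff unfolding dense_in_poset_def iso_image_eq[symmetric] by fastforce

lemma poset_filter_iso_preimage:
  assumes "poset_filter P' le' G'"
  shows "poset_filter P le {p \<in> P. h p \<in> G'}"
proof -
  have G': "G' \<subseteq> h ` P" "G' \<noteq> {}" "\<And>p q. p \<in> G' \<Longrightarrow> q \<in> h ` P \<Longrightarrow> le' p q \<Longrightarrow> q \<in> G'"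
    "\<And>p q. p \<in> G' \<Longrightarrow> q \<in> G' \<Longrightarrow> \<exists>r\<in>G'. le' r p \<and> le' r q"
    using assms by (simp_all add: poset_filter_def iso_image_eq)
  show ?thesis
    unfolding poset_filter_def
  proof (intro conjI ballI impI)
    show "{p \<in> P. h p \<in> G'} \<noteq> {}"
      using G'(1,2) by blast
    show "q \<in> {p \<in> P. h p \<in> G'}" if "p \<in> {p \<in> P. h p \<in> G'}" "q \<in> P" "le p q" for p q
      using that G'(3)[of "h p" "h q"] le_iff[of p q] by simp
    show "\<exists>r\<in>{p \<in> P. h p \<in> G'}. le r p \<and> le r q"
      if "p \<in> {p \<in> P. h p \<in> G'}" "q \<in> {p \<in> P. h p \<in> G'}" for p q
    proof -
      have "h p \<in> G'" "h q \<in> G'" "p \<in> P" "q \<in> P"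
        using that by simp_all
      then obtain r' where r': "r' \<in> G'" "le' r' (h p)" "le' r' (h q)"
        using G'(4) by blast
      then obtain r where r: "r \<in> P" "r' = h r"
        using G'(1) by blast
      have "le r p" "le r q"
        using r' r le_iff \<open>p \<in> P\<close> \<open>q \<in> P\<close> by simp_all
      then show ?thesis
        using r r'(1) by blast
    qed
  qed blast
qed

end

lemma MA_sigma_centeredD:
  fixes P :: "nat set set"
  assumes "MA_sigma_centered" "P \<noteq> {}" "partial_order_on P {(p, q). p \<in> P \<and> q \<in> P \<and> le p q}"
    "sigma_centered P le" "\<D> \<prec> continuum_set" "\<forall>D\<in>\<D>. dense_in_poset P le D"
  shows "\<exists>G. poset_filter P le G \<and> (\<forall>D\<in>\<D>. G \<inter> D \<noteq> {})"
  using assms unfolding MA_sigma_centered_def by blast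

lemma MA_sigma_centered_lepoll:
  fixes P :: "'a set" and le :: "'a \<Rightarrow> 'a \<Rightarrow> bool"
  assumes MA: "MA_sigma_centered" and small: "P \<lesssim> (UNIV :: nat set set)"
    and "P \<noteq> {}" and po: "partial_order_on P {(p, q). p \<in> P \<and> q \<in> P \<and> le p q}"
    and sc: "sigma_centered P le"
    and card: "\<D> \<prec> continuum_set" and dense: "\<forall>D\<in>\<D>. dense_in_poset P le D"
  shows "\<exists>G. poset_filter P le G \<and> (\<forall>D\<in>\<D>. G \<inter> D \<noteq> {})"
proof -
  obtain e :: "'a \<Rightarrow> nat set" where "inj_on e P"
    using small unfolding lepoll_def by blast
  then have bij: "bij_betw e P (e ` P)"
    by (simp add: bij_betw_def)
  define le' where "le' a b \<longleftrightarrow> le (inv_into P e a) (inv_into P e b)" for a b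
  have le_iff: "le' (e p) (e q) \<longleftrightarrow> le p q" if "p \<in> P" "q \<in> P" for p q
    using that \<open>inj_on e P\<close> by (simp add: le'_def)
  note iso = bij le_iff
  have ne: "e ` P \<noteq> {}"
    using \<open>P \<noteq> {}\<close> by blast
  have card': "(\<lambda>D. e ` D) ` \<D> \<prec> continuum_set"
    using lesspoll_trans1[OF image_lepoll card] .
  have dense': "\<forall>D'\<in>(\<lambda>D. e ` D) ` \<D>. dense_in_poset (e ` P) le' D'"
    using dense_in_poset_iso[where h = e and le = le and le' = le', OF iso] dense by blast
  obtain G' where G': "poset_filter (e ` P) le' G'" "\<forall>D'\<in>(\<lambda>D. e ` D) ` \<D>. G' \<inter> D' \<noteq> {}"
    using MA_sigma_centeredD[OF MA ne
        partial_order_on_iso[where h = e and le = le and le' = le', OF iso po]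
        sigma_centered_iso[where h = e and le = le and le' = le', OF iso sc] card' dense']
    by blast
  have "{p \<in> P. e p \<in> G'} \<inter> D \<noteq> {}" if "D \<in> \<D>" for D
  proof -
    have "D \<subseteq> P"
      using dense that by (simp add: dense_in_poset_def)
    moreover have "G' \<inter> e ` D \<noteq> {}"
      using bspec[OF G'(2) imageI[OF that]] .
    then obtain d where "d \<in> D" "e d \<in> G'"
      by blast
    ultimately show ?thesis
      by blast
  qed
  then show ?thesis
    using poset_filter_iso_preimage[where h = e and le = le and le' = le', OF iso G'(1)]
    by blast
qed

lemma sigma_centered_if_countable_keys:
  assumes countable: "countable (key ` P)"
    and common_bound: "\<And>F. finite F \<Longrightarrow> F \<subseteq> P \<Longrightarrow> (\<And>p q. p \<in> F \<Longrightarrow> q \<in> F \<Longrightarrow> key p = key q)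
      \<Longrightarrow> \<exists>r\<in>P. \<forall>q\<in>F. le r q"
  shows "sigma_centered P le"
proof -
  define C where "C n = {p \<in> P. key p = from_nat_into (key ` P) n}" for n
  have "P \<subseteq> (\<Union>n. C n)"
  proof
    fix p
    assume "p \<in> P"
    then obtain n where "from_nat_into (key ` P) n = key p"
      using from_nat_into_surj[OF countable] by blast
    then have "p \<in> C n"
      using \<open>p \<in> P\<close> by (simp add: C_def)
    then show "p \<in> (\<Union>n. C n)"
      by blast
  qed
  then have "P = (\<Union>n. C n)"
    by (auto simp: C_def)
  moreover have "centered P le (C n)" for n
    unfolding centered_def
  proof (intro conjI allI impI)
    show "C n \<subseteq> P"
      by (auto simp: C_def)
    fix F
    assume F: "finite F \<and> F \<subseteq> C n"
    then have "F \<subseteq> P" "\<And>p. p \<in> F \<Longrightarrow> key p = from_nat_into (key ` P) n"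
      by (auto simp: C_def)
    then show "\<exists>r\<in>P. \<forall>q\<in>F. le r q"
      using F by (intro common_bound) simp_all
  qed
  ultimately show ?thesis
    unfolding sigma_centered_def by (intro exI[of _ C]) simp
qed

lemma countable_lesspoll_continuum:
  assumes "countable X"
  shows "X \<prec> continuum_set"
proof -
  have "X \<lesssim> (UNIV :: nat set)"
    using assms by (auto simp: countable_def lepoll_def)
  moreover have "Pow (UNIV :: nat set) \<approx> continuum_set"
    unfolding eqpoll_def
    by (rule exI[of _ "\<lambda>S n. n \<in> S"], rule bij_betw_byWitness[where f' = "\<lambda>x. {n. x n}"]) auto
  ultimately show ?thesis
    using lesspoll_trans1 lesspoll_eq_trans lesspoll_Pow_self by metis
qed

lemma UN_countable_lesspoll_continuum:
  assumes I: "I \<prec> continuum_set" and countable: "\<And>\<alpha>. \<alpha> \<in> I \<Longrightarrow> countable (X \<alpha>)"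
  shows "(\<Union>\<alpha>\<in>I. X \<alpha>) \<prec> continuum_set"
proof (cases "finite I")
  case True
  then show ?thesis
    using countable
    by (intro countable_lesspoll_continuum countable_UN) (auto intro: countable_finite)
next
  case False
  have "(\<Union>\<alpha>\<in>I. X \<alpha>) \<subseteq> (\<lambda>(\<alpha>, n). from_nat_into (X \<alpha>) n) ` (I \<times> (UNIV :: nat set))"
  proof
    fix x
    assume "x \<in> (\<Union>\<alpha>\<in>I. X \<alpha>)"
    then obtain \<alpha> where "\<alpha> \<in> I" "x \<in> X \<alpha>"
      by blast
    moreover obtain n where "from_nat_into (X \<alpha>) n = x"
      using from_nat_into_surj[OF countable] calculation by blast
    ultimately show "x \<in> (\<lambda>(\<alpha>, n). from_nat_into (X \<alpha>) n) ` (I \<times> UNIV)"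
      by (intro rev_image_eqI[of "(\<alpha>, n)"]) simp_all
  qed
  then have "(\<Union>\<alpha>\<in>I. X \<alpha>) \<lesssim> I \<times> (UNIV :: nat set)"
    by (rule subset_image_lepoll)
  also have "\<dots> \<lesssim> I \<times> I"
    using infinite_le_lepoll[THEN iffD1, OF False] by (intro times_lepoll_mono lepoll_refl)
  also have "\<dots> \<lesssim> I"
    using card_of_Times_same_infinite[OF False, folded eqpoll_iff_card_of_ordIso]
    by (rule eqpoll_imp_lepoll)
  finally show ?thesis
    using I by (rule lesspoll_trans1)
qed

definition list_code :: "(nat \<Rightarrow> bool) list \<Rightarrow> nat set" where
  "list_code xs = {prod_encode (i, 0) | i. i < length xs}
    \<union> {prod_encode (i, Suc j) | i j. i < length xs \<and> (xs ! i) j}"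

lemma inj_list_code: "inj list_code"
proof (rule injI)
  fix xs ys
  assume eq: "list_code xs = list_code ys"
  have code_iff: "prod_encode (i, 0) \<in> list_code zs \<longleftrightarrow> i < length zs"
    "i < length zs \<Longrightarrow> prod_encode (i, Suc j) \<in> list_code zs \<longleftrightarrow> (zs ! i) j" for i j zs
    by (auto simp: list_code_def dest: inj_onD[OF inj_prod_encode[of UNIV]])
  have "i < length xs \<longleftrightarrow> i < length ys" for i
    using code_iff(1) eq by blast
  then have "length xs = length ys"
    by (metis less_irrefl nat_neq_iff)
  moreover have "xs ! i = ys ! i" if "i < length xs" for i
  proof
    fix j
    show "(xs ! i) j = (ys ! i) j"
      using code_iff(2)[of i xs j] code_iff(2)[of i ys j] eq that \<open>length xs = length ys\<close>
      by simp
  qed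
  ultimately show "xs = ys"
    by (rule nth_equalityI)
qed

definition interleave :: "(nat \<Rightarrow> bool) \<times> (nat \<Rightarrow> bool) \<Rightarrow> nat \<Rightarrow> bool" where
  "interleave z k = (if even k then fst z (k div 2) else snd z (k div 2))"

lemma inj_interleave: "inj interleave"
proof (rule injI)
  fix z w
  assume eq: "interleave z = interleave w"
  have "fst z k = fst w k" "snd z k = snd w k" for k
    using fun_cong[OF eq, of "2 * k"] fun_cong[OF eq, of "2 * k + 1"]
    by (simp_all add: interleave_def)
  then show "z = w"
    by (simp add: prod_eq_iff fun_eq_iff)
qed

lemma countable_times_finite_sets_lepoll:
  assumes "countable C"
  shows "C \<times> {H :: ((nat \<Rightarrow> bool) \<times> (nat \<Rightarrow> bool)) set. finite H} \<lesssim> (UNIV :: nat set set)"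
proof -
  define list_of :: "((nat \<Rightarrow> bool) \<times> (nat \<Rightarrow> bool)) set \<Rightarrow> _" where
    "list_of H = (SOME xs. set xs = H)" for H
  have set_list_of: "set (list_of H) = H" if "finite H" for H
    unfolding list_of_def using finite_list[OF that] by (rule someI_ex)
  define e where "e = (\<lambda>(c, H). list_code ((\<lambda>j. j = to_nat_on C c) # map interleave (list_of H)))"
  have "inj_on e (C \<times> {H. finite H})"
  proof (rule inj_onI, clarify)
    fix c H c' H'
    assume "c \<in> C" "c' \<in> C" "finite H" "finite H'" "e (c, H) = e (c', H')"
    then have "(\<lambda>j. j = to_nat_on C c) = (\<lambda>j. j = to_nat_on C c')"
      "map interleave (list_of H) = map interleave (list_of H')"
      using injD[OF inj_list_code] by (auto simp: e_def)
    then have "to_nat_on C c = to_nat_on C c'" "list_of H = list_of H'"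
      using fun_cong[of "\<lambda>j. j = to_nat_on C c" _ "to_nat_on C c"] inj_map_eq_map[OF inj_interleave]
      by simp_all
    then show "c = c' \<and> H = H'"
      using \<open>c \<in> C\<close> \<open>c' \<in> C\<close> \<open>finite H\<close> \<open>finite H'\<close> set_list_of
        inj_on_eq_iff[OF inj_on_to_nat_on[OF assms]] by metis
  qed
  then show ?thesis
    unfolding lepoll_def by (intro exI[of _ e]) simp
qed

section \<open>Finite approximations to the homeomorphism\<close>

lemma countable_disjoint_family_index:
  assumes countable: "\<And>\<alpha>. \<alpha> \<in> I \<Longrightarrow> countable (X \<alpha>)" and disjoint: "disjoint_family_on X I"
  shows "\<exists>f :: 'a \<Rightarrow> nat. \<forall>\<alpha>\<in>I. inj_on f (X \<alpha>)"
proof -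
  define f where "f x = to_nat_on (X (SOME \<alpha>. \<alpha> \<in> I \<and> x \<in> X \<alpha>)) x" for x
  have "inj_on f (X \<alpha>)" if "\<alpha> \<in> I" for \<alpha>
  proof -
    have "(SOME \<beta>. \<beta> \<in> I \<and> x \<in> X \<beta>) = \<alpha>" if "x \<in> X \<alpha>" for x
    proof (rule some_equality)
      show "\<alpha> \<in> I \<and> x \<in> X \<alpha>"
        using \<open>\<alpha> \<in> I\<close> that by simp
      show "\<beta> = \<alpha>" if \<beta>: "\<beta> \<in> I \<and> x \<in> X \<beta>" for \<beta>
      proof (rule ccontr)
        assume "\<beta> \<noteq> \<alpha>"
        then have "X \<beta> \<inter> X \<alpha> = {}"
          using disjoint \<beta> \<open>\<alpha> \<in> I\<close> unfolding disjoint_family_on_def by blast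
        then show False
          using \<beta> \<open>x \<in> X \<alpha>\<close> by blast
      qed
    qed
    then have "inj_on f (X \<alpha>) \<longleftrightarrow> inj_on (to_nat_on (X \<alpha>)) (X \<alpha>)"
      by (intro inj_on_cong) (simp add: f_def)
    then show ?thesis
      using inj_on_to_nat_on[OF countable[OF that]] by simp
  qed
  then show ?thesis
    by blast
qed

record condition =
  level :: nat
  perm :: "bool list \<Rightarrow> bool list"
  pairs :: "((nat \<Rightarrow> bool) \<times> (nat \<Rightarrow> bool)) set"

definition extends :: "condition \<Rightarrow> condition \<Rightarrow> bool" where
  "extends p q \<longleftrightarrow> refines (level p) (perm p) (level q) (perm q) \<and> pairs q \<subseteq> pairs p"

lemma extends_trans: "extends p q \<Longrightarrow> extends q r \<Longrightarrow> extends p r"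
  unfolding extends_def using refines_trans by (meson subset_trans)

locale dense_families =
  fixes I :: "'i set" and A B :: "'i \<Rightarrow> (nat \<Rightarrow> bool) set"
    and index_A index_B :: "(nat \<Rightarrow> bool) \<Rightarrow> nat"
  assumes A_dense: "\<And>\<alpha>. \<alpha> \<in> I \<Longrightarrow> cantor_space closure_of A \<alpha> = topspace cantor_space"
    and B_dense: "\<And>\<alpha>. \<alpha> \<in> I \<Longrightarrow> cantor_space closure_of B \<alpha> = topspace cantor_space"
    and A_disjoint: "disjoint_family_on A I"
    and B_disjoint: "disjoint_family_on B I"
    and inj_index_A: "\<And>\<alpha>. \<alpha> \<in> I \<Longrightarrow> inj_on index_A (A \<alpha>)"
    and inj_index_B: "\<And>\<alpha>. \<alpha> \<in> I \<Longrightarrow> inj_on index_B (B \<alpha>)"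
begin

definition matched :: "(nat \<Rightarrow> bool) \<Rightarrow> (nat \<Rightarrow> bool) \<Rightarrow> bool" where
  "matched x y \<longleftrightarrow> (\<exists>\<alpha>\<in>I. x \<in> A \<alpha> \<and> y \<in> B \<alpha>)"

lemma matched_same_index:
  assumes "matched x y" "matched x' y'" "x = x' \<or> y = y'"
  obtains \<alpha> where "\<alpha> \<in> I" "x \<in> A \<alpha>" "x' \<in> A \<alpha>" "y \<in> B \<alpha>" "y' \<in> B \<alpha>"
proof -
  obtain \<alpha> \<beta> where "\<alpha> \<in> I" "x \<in> A \<alpha>" "y \<in> B \<alpha>" "\<beta> \<in> I" "x' \<in> A \<beta>" "y' \<in> B \<beta>"
    using assms(1,2) unfolding matched_def by blast
  moreover have "\<alpha> = \<beta>"
    using assms(3) calculation A_disjoint B_disjoint unfolding disjoint_family_on_def by blast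
  ultimately show thesis
    using that by blast
qed

lemma image_eq_if_matching:
  assumes graph: "\<And>x y. (x, y) \<in> H \<Longrightarrow> f x = y \<and> matched x y"
    and total: "\<And>\<alpha>. \<alpha> \<in> I \<Longrightarrow> A \<alpha> \<subseteq> Domain H" "\<And>\<alpha>. \<alpha> \<in> I \<Longrightarrow> B \<alpha> \<subseteq> Range H"
    and "\<alpha> \<in> I"
  shows "f ` A \<alpha> = B \<alpha>"
proof (intro equalityI subsetI)
  fix y
  assume "y \<in> f ` A \<alpha>"
  then obtain x where x: "x \<in> A \<alpha>" "y = f x"
    by blast
  then obtain y' where "(x, y') \<in> H"
    using total(1)[OF \<open>\<alpha> \<in> I\<close>] by blast
  then have "y' = y" "matched x y'"
    using graph x(2) by auto
  then obtain \<beta> where "\<beta> \<in> I" "x \<in> A \<beta>" "y \<in> B \<beta>"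
    by (auto simp: matched_def)
  moreover have "\<beta> = \<alpha>"
    using calculation x(1) \<open>\<alpha> \<in> I\<close> A_disjoint by (auto simp: disjoint_family_on_def)
  ultimately show "y \<in> B \<alpha>"
    by simp
next
  fix y
  assume "y \<in> B \<alpha>"
  then obtain x where "(x, y) \<in> H"
    using total(2)[OF \<open>\<alpha> \<in> I\<close>] by blast
  then have "f x = y" "matched x y"
    using graph by blast+
  then obtain \<beta> where "\<beta> \<in> I" "x \<in> A \<beta>" "y \<in> B \<beta>"
    by (auto simp: matched_def)
  then have "\<beta> = \<alpha>"
    using \<open>y \<in> B \<alpha>\<close> \<open>\<alpha> \<in> I\<close> B_disjoint by (auto simp: disjoint_family_on_def)
  then show "y \<in> f ` A \<alpha>"
    using \<open>f x = y\<close> \<open>x \<in> A \<beta>\<close> by blast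
qed

definition conditions :: "condition set" where
  "conditions = {p. perm p permutes bitstrings (level p) \<and> finite (pairs p) \<and> inj_on fst (pairs p)
     \<and> inj_on (cantor_prefix (level p)) (Domain (pairs p))
     \<and> (\<forall>(x, y)\<in>pairs p. matched x y)
     \<and> (\<forall>(x, y)\<in>pairs p. perm p (cantor_prefix (level p) x) = cantor_prefix (level p) y)}"

lemma conditionsD:
  assumes "p \<in> conditions"
  shows "perm p permutes bitstrings (level p)" "finite (pairs p)" "inj_on fst (pairs p)"
    "inj_on (cantor_prefix (level p)) (Domain (pairs p))"
    "\<And>x y. (x, y) \<in> pairs p \<Longrightarrow> matched x y"
    "\<And>x y. (x, y) \<in> pairs p \<Longrightarrow> perm p (cantor_prefix (level p) x) = cantor_prefix (level p) y"
proof -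
  note c = assms[unfolded conditions_def mem_Collect_eq]
  show "perm p permutes bitstrings (level p)" "finite (pairs p)" "inj_on fst (pairs p)"
    "inj_on (cantor_prefix (level p)) (Domain (pairs p))"
    using c by simp_all
  show "matched x y" "perm p (cantor_prefix (level p) x) = cantor_prefix (level p) y"
    if "(x, y) \<in> pairs p" for x y
    using c that by fast+
qed

lemma inj_on_snd_pairs:
  assumes p: "p \<in> conditions"
  shows "inj_on snd (pairs p)"
proof -
  have same_fst: "x = x'" if xy: "(x, y) \<in> pairs p" "(x', y) \<in> pairs p" for x x' y
  proof -
    have "perm p (cantor_prefix (level p) x) = perm p (cantor_prefix (level p) x')"
      using conditionsD(6)[OF p] xy by simp
    then have "cantor_prefix (level p) x = cantor_prefix (level p) x'"
      using permutes_inj[OF conditionsD(1)[OF p]] by (simp add: inj_eq)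
    then show "x = x'"
      using inj_onD[OF conditionsD(4)[OF p]] xy by blast
  qed
  then show ?thesis
  proof (intro inj_onI)
    fix z z'
    assume z: "z \<in> pairs p" "z' \<in> pairs p" "snd z = snd z'"
    have "(fst z, snd z) \<in> pairs p"
      using z(1) by simp
    moreover have "(fst z', snd z) \<in> pairs p"
      using z(2,3) by simp
    ultimately have "fst z = fst z'"
      by (rule same_fst)
    then show "z = z'"
      using z(3) by (simp add: prod_eq_iff)
  qed
qed

lemma empty_condition: "\<lparr>level = 0, perm = id, pairs = {}\<rparr> \<in> conditions"
  by (simp add: conditions_def permutes_id)

lemma extends_refl: "p \<in> conditions \<Longrightarrow> extends p p"
  by (simp add: extends_def refines_refl conditionsD(1))

lemma extends_antisym:
  assumes p: "p \<in> conditions" and q: "q \<in> conditions" and "extends p q" "extends q p"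
  shows "p = q"
proof (rule condition.equality)
  have "level q \<le> level p" "pairs q \<subseteq> pairs p" "level p \<le> level q" "pairs p \<subseteq> pairs q"
    using assms(3,4) unfolding extends_def refines_def by blast+
  then show n: "level p = level q" "pairs p = pairs q"
    by simp_all
  show "perm p = perm q"
  proof
    fix t
    show "perm p t = perm q t"
    proof (cases "length t = level p")
      case True
      then have "take (level q) (perm p t) = perm q (take (level q) t)"
        using assms(3) by (simp add: extends_def refines_def)
      then show ?thesis
        using True n length_permutes_bitstrings[OF conditionsD(1)[OF p]] by simp
    next
      case False
      then show ?thesis
        using n permutes_not_in[OF conditionsD(1)[OF p]] permutes_not_in[OF conditionsD(1)[OF q]]
        by simp
    qed
  qed
qed simp

lemma partial_order_on_conditions:
  "partial_order_on conditions {(p, q). p \<in> conditions \<and> q \<in> conditions \<and> extends p q}"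
  unfolding partial_order_on_Collect_iff
proof (intro conjI ballI impI)
  show "extends p p" if "p \<in> conditions" for p
    using that by (rule extends_refl)
  show "extends p r" if "extends p q" "extends q r" for p q r
    using that by (rule extends_trans)
  show "p = q" if "p \<in> conditions" "q \<in> conditions" "extends p q" "extends q p" for p q
    using that by (rule extends_antisym)
qed

lemma extend_condition:
  assumes p: "p \<in> conditions"
    and H: "finite H" "pairs p \<subseteq> H" "inj_on fst H" "inj_on snd H"
    and matched: "\<And>x y. (x, y) \<in> H \<Longrightarrow> matched x y"
    and compatible:
      "\<And>x y. (x, y) \<in> H \<Longrightarrow> perm p (cantor_prefix (level p) x) = cantor_prefix (level p) y"
  shows "\<exists>r\<in>conditions. extends r p \<and> pairs r = H \<and> k \<le> level r"
proof -
  have "\<forall>(x, y)\<in>H. perm p (cantor_prefix (level p) x) = cantor_prefix (level p) y"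
    using compatible by blast
  then obtain m \<sigma> where m: "k \<le> m" "\<sigma> permutes bitstrings m" "refines m \<sigma> (level p) (perm p)"
    "\<forall>(x, y)\<in>H. \<sigma> (cantor_prefix m x) = cantor_prefix m y" "inj_on (cantor_prefix m) (Domain H)"
    using separating_refinement_exists[OF conditionsD(1)[OF p] H(1,3,4)] by blast
  define r where "r = \<lparr>level = m, perm = \<sigma>, pairs = H\<rparr>"
  have "\<forall>(x, y)\<in>H. matched x y"
    using matched by blast
  then have "r \<in> conditions"
    using m(2,4,5) H(1,3) by (simp add: r_def conditions_def)
  moreover have "extends r p"
    using m(3) H(2) by (simp add: r_def extends_def)
  ultimately show ?thesis
    using m(1) by (intro bexI[of _ r]) (simp_all add: r_def)
qed

lemma dense_level: "dense_in_poset conditions extends {p \<in> conditions. k \<le> level p}"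
  unfolding dense_in_poset_def
proof (intro conjI ballI)
  fix p
  assume p: "p \<in> conditions"
  then obtain r where "r \<in> conditions" "extends r p" "k \<le> level r"
    using extend_condition[OF p conditionsD(2)[OF p] subset_refl conditionsD(3)[OF p]
        inj_on_snd_pairs[OF p] conditionsD(5)[OF p] conditionsD(6)[OF p]]
    by blast
  then show "\<exists>r\<in>{p \<in> conditions. k \<le> level p}. extends r p"
    by blast
qed blast

lemma extension_adding_pair:
  assumes p: "p \<in> conditions" and "\<alpha> \<in> I" "x \<in> A \<alpha>" "y \<in> B \<alpha>"
    and new: "x \<notin> Domain (pairs p)" "y \<notin> Range (pairs p)"
    and compatible: "perm p (cantor_prefix (level p) x) = cantor_prefix (level p) y"
  shows "\<exists>r\<in>conditions. extends r p \<and> (x, y) \<in> pairs r"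
proof -
  let ?H = "insert (x, y) (pairs p)"
  have "inj_on fst ?H" "inj_on snd ?H"
    using conditionsD(3)[OF p] inj_on_snd_pairs[OF p] new
    by (simp_all add: fst_eq_Domain snd_eq_Range) blast+
  moreover have "matched x y"
    using assms(2-4) unfolding matched_def by blast
  then have "matched a b" if "(a, b) \<in> ?H" for a b
    using that conditionsD(5)[OF p, of a b] by auto
  moreover have "perm p (cantor_prefix (level p) a) = cantor_prefix (level p) b"
    if "(a, b) \<in> ?H" for a b
    using that conditionsD(6)[OF p, of a b] compatible by auto
  ultimately obtain r where "r \<in> conditions" "extends r p" "pairs r = ?H"
    using extend_condition[OF p, of ?H 0] conditionsD(2)[OF p] by blast
  then show ?thesis
    by blast
qed

lemma dense_domain:
  assumes "\<alpha> \<in> I" "x \<in> A \<alpha>"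
  shows "dense_in_poset conditions extends {p \<in> conditions. x \<in> Domain (pairs p)}"
  unfolding dense_in_poset_def
proof (intro conjI ballI)
  fix p
  assume p: "p \<in> conditions"
  show "\<exists>r\<in>{p \<in> conditions. x \<in> Domain (pairs p)}. extends r p"
  proof (cases "x \<in> Domain (pairs p)")
    case True
    then show ?thesis
      using p extends_refl by blast
  next
    case False
    have "finite (Range (pairs p))"
      using conditionsD(2)[OF p] by (simp add: finite_Range)
    moreover have "length (perm p (cantor_prefix (level p) x)) = level p"
      using length_permutes_bitstrings[OF conditionsD(1)[OF p]] by simp
    ultimately obtain y where y: "y \<in> B \<alpha>" "y \<notin> Range (pairs p)"
      "cantor_prefix (level p) y = perm p (cantor_prefix (level p) x)"
      using dense_meets_cylinder_outside_finite[OF B_dense[OF assms(1)]] by blast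
    then obtain r where "r \<in> conditions" "extends r p" "(x, y) \<in> pairs r"
      using extension_adding_pair[OF p assms y(1) False y(2)] by metis
    then show ?thesis
      by blast
  qed
qed blast

lemma dense_range:
  assumes "\<alpha> \<in> I" "y \<in> B \<alpha>"
  shows "dense_in_poset conditions extends {p \<in> conditions. y \<in> Range (pairs p)}"
  unfolding dense_in_poset_def
proof (intro conjI ballI)
  fix p
  assume p: "p \<in> conditions"
  show "\<exists>r\<in>{p \<in> conditions. y \<in> Range (pairs p)}. extends r p"
  proof (cases "y \<in> Range (pairs p)")
    case True
    then show ?thesis
      using p extends_refl by blast
  next
    case False
    let ?\<pi> = "perm p"
    have \<pi>: "?\<pi> permutes bitstrings (level p)"
      using conditionsD(1)[OF p] .
    have "finite (Domain (pairs p))"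
      using conditionsD(2)[OF p] by (simp add: finite_Domain)
    moreover have "length (inv ?\<pi> (cantor_prefix (level p) y)) = level p"
      using length_permutes_bitstrings[OF permutes_inv[OF \<pi>]] by simp
    ultimately obtain x where x: "x \<in> A \<alpha>" "x \<notin> Domain (pairs p)"
      "cantor_prefix (level p) x = inv ?\<pi> (cantor_prefix (level p) y)"
      using dense_meets_cylinder_outside_finite[OF A_dense[OF assms(1)]] by blast
    then have "?\<pi> (cantor_prefix (level p) x) = cantor_prefix (level p) y"
      using permutes_inverses(1)[OF \<pi>] by simp
    then obtain r where "r \<in> conditions" "extends r p" "(x, y) \<in> pairs r"
      using extension_adding_pair[OF p assms(1) x(1) assms(2) x(2) False] by metis
    then show ?thesis
      by blast
  qed
qed blast

text \<open>
  As the promised points of a condition lie in distinct cylinders, conditions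
  with equal keys make consistent promises.
\<close>

definition key :: "condition \<Rightarrow> (nat \<times> (bool list \<Rightarrow> bool list)) \<times> (bool list \<times> nat \<times> nat) set" where
  "key p = ((level p, perm p),
     (\<lambda>(x, y). (cantor_prefix (level p) x, index_A x, index_B y)) ` pairs p)"

lemma countable_keys: "countable (key ` conditions)"
proof (rule countable_subset)
  show "key ` conditions \<subseteq> (SIGMA n:UNIV. {\<pi>. \<pi> permutes bitstrings n}) \<times> {T. finite T}"
  proof
    fix k
    assume "k \<in> key ` conditions"
    then obtain p where "p \<in> conditions" "k = key p"
      by blast
    then show "k \<in> (SIGMA n:UNIV. {\<pi>. \<pi> permutes bitstrings n}) \<times> {T. finite T}"
      using conditionsD(1,2) by (simp add: key_def)
  qed
  show "countable ((SIGMA n:UNIV. {\<pi>. \<pi> permutes bitstrings n})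
      \<times> {T :: (bool list \<times> nat \<times> nat) set. finite T})"
    using countable_level_permutations by (rule countable_SIGMA) (rule countable_Collect_finite)
qed

lemma same_key_pairs_agree:
  assumes p: "p \<in> conditions" and q: "q \<in> conditions" and "key p = key q"
    and xy: "(x, y) \<in> pairs p" and xy': "(x', y') \<in> pairs q"
  shows "x = x' \<longleftrightarrow> y = y'"
proof -
  have same: "level q = level p" "perm q = perm p"
    using \<open>key p = key q\<close> by (simp_all add: key_def)
  let ?n = "level p"
  have "(cantor_prefix ?n x, index_A x, index_B y)
      \<in> (\<lambda>(x, y). (cantor_prefix (level q) x, index_A x, index_B y)) ` pairs q"
    using \<open>key p = key q\<close> xy unfolding key_def
    by (metis (no_types, lifting) case_prod_conv image_eqI snd_conv)
  then obtain x'' y'' where xy'': "(x'', y'') \<in> pairs q" "cantor_prefix ?n x'' = cantor_prefix ?n x"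
    "index_A x'' = index_A x" "index_B y'' = index_B y"
    using same by auto
  have x''_eq: "x'' = x'" if "cantor_prefix ?n x = cantor_prefix ?n x'"
    using inj_onD[OF conditionsD(4)[OF q]] xy'' xy' that same by (metis Domain.DomainI)
  show ?thesis
  proof
    assume "x = x'"
    then have "y'' = y'"
      using x''_eq xy'' xy' inj_onD[OF conditionsD(3)[OF q], of "(x'', y'')" "(x', y')"] by auto
    moreover obtain \<alpha> where "\<alpha> \<in> I" "y \<in> B \<alpha>" "y' \<in> B \<alpha>"
      using matched_same_index[OF conditionsD(5)[OF p xy] conditionsD(5)[OF q xy']] \<open>x = x'\<close>
      by metis
    ultimately show "y = y'"
      using inj_onD[OF inj_index_B] xy''(4) by metis
  next
    assume "y = y'"
    have "perm p (cantor_prefix ?n x) = perm p (cantor_prefix ?n x')"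
      using conditionsD(6)[OF p xy] conditionsD(6)[OF q xy'] same \<open>y = y'\<close> by simp
    then have "cantor_prefix ?n x = cantor_prefix ?n x'"
      using permutes_inj[OF conditionsD(1)[OF p]] by (simp add: inj_eq)
    then have "index_A x' = index_A x"
      using x''_eq xy''(3) by simp
    moreover obtain \<alpha> where "\<alpha> \<in> I" "x \<in> A \<alpha>" "x' \<in> A \<alpha>"
      using matched_same_index[OF conditionsD(5)[OF p xy] conditionsD(5)[OF q xy']] \<open>y = y'\<close>
      by metis
    ultimately show "x = x'"
      using inj_onD[OF inj_index_A] by metis
  qed
qed

lemma same_key_common_extension:
  assumes F: "finite F" "F \<subseteq> conditions"
    and same_key: "\<And>p q. p \<in> F \<Longrightarrow> q \<in> F \<Longrightarrow> key p = key q"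
  shows "\<exists>r\<in>conditions. \<forall>q\<in>F. extends r q"
proof (cases "F = {}")
  case True
  then show ?thesis
    using empty_condition by blast
next
  case False
  then obtain p where p: "p \<in> F"
    by blast
  then have p_cond: "p \<in> conditions"
    using F(2) by blast
  define H where "H = (\<Union>q\<in>F. pairs q)"
  have q_cond: "q \<in> conditions" and level_perm: "level q = level p" "perm q = perm p"
    if "q \<in> F" for q
    using that F(2) same_key[OF that p] by (auto simp: key_def)
  have agree: "x = x' \<longleftrightarrow> y = y'" if "(x, y) \<in> H" "(x', y') \<in> H" for x y x' y'
    using that same_key_pairs_agree[OF q_cond q_cond same_key] unfolding H_def by blast
  have "finite H"
    using F conditionsD(2) unfolding H_def by blast
  moreover have "pairs p \<subseteq> H"
    using p unfolding H_def by blast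
  moreover have "inj_on fst H" "inj_on snd H"
    using agree by (auto intro!: inj_onI)
  moreover have "matched x y" "perm p (cantor_prefix (level p) x) = cantor_prefix (level p) y"
    if "(x, y) \<in> H" for x y
    using that conditionsD(5,6)[OF q_cond] level_perm unfolding H_def by fastforce+
  ultimately obtain r where r: "r \<in> conditions" "extends r p" "pairs r = H"
    using extend_condition[OF p_cond, of H 0] by blast
  have "extends r q" if "q \<in> F" for q
    using r(2,3) level_perm[OF that] that unfolding extends_def H_def by auto
  then show ?thesis
    using r(1) by blast
qed

lemma sigma_centered_conditions: "sigma_centered conditions extends"
  using countable_keys same_key_common_extension by (rule sigma_centered_if_countable_keys)

lemma conditions_lepoll: "conditions \<lesssim> (UNIV :: nat set set)"
proof -
  define C where "C = (SIGMA n:UNIV. {\<pi>. \<pi> permutes bitstrings n})"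
  have "countable C"
    unfolding C_def by (rule countable_level_permutations)
  define enc :: "condition \<Rightarrow> _ \<times> ((nat \<Rightarrow> bool) \<times> (nat \<Rightarrow> bool)) set"
    where "enc p = ((level p, perm p), pairs p)" for p
  have "inj_on enc conditions"
    by (auto simp: enc_def intro!: inj_onI condition.equality)
  moreover have "enc ` conditions \<subseteq> C \<times> {H. finite H}"
    using conditionsD(1,2) by (auto simp: C_def enc_def)
  ultimately have "conditions \<lesssim> C \<times> {H :: ((nat \<Rightarrow> bool) \<times> (nat \<Rightarrow> bool)) set. finite H}"
    unfolding lepoll_def by blast
  also have "\<dots> \<lesssim> (UNIV :: nat set set)"
    using \<open>countable C\<close> by (rule countable_times_finite_sets_lepoll)
  finally show ?thesis .
qed

lemma generic_filter_exists:
  assumes MA: "MA_sigma_centered" and I: "I \<prec> continuum_set" "I \<noteq> {}"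
    and countable: "\<And>\<alpha>. \<alpha> \<in> I \<Longrightarrow> countable (A \<alpha>)" "\<And>\<alpha>. \<alpha> \<in> I \<Longrightarrow> countable (B \<alpha>)"
  shows "\<exists>G. poset_filter conditions extends G \<and> (\<forall>k. \<exists>p\<in>G. k \<le> level p)
    \<and> (\<forall>\<alpha>\<in>I. \<forall>x\<in>A \<alpha>. \<exists>p\<in>G. x \<in> Domain (pairs p))
    \<and> (\<forall>\<alpha>\<in>I. \<forall>y\<in>B \<alpha>. \<exists>p\<in>G. y \<in> Range (pairs p))"
proof -
  define E where "E k = {p \<in> conditions. k \<le> level p}" for k
  define DA where "DA x = {p \<in> conditions. x \<in> Domain (pairs p)}" for x
  define DB where "DB y = {p \<in> conditions. y \<in> Range (pairs p)}" for y
  define \<D> where "\<D> = (\<Union>\<alpha>\<in>I. range E \<union> DA ` A \<alpha> \<union> DB ` B \<alpha>)"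
  have "\<D> \<prec> continuum_set"
    unfolding \<D>_def using I(1) countable by (intro UN_countable_lesspoll_continuum) auto
  moreover have "\<forall>D\<in>\<D>. dense_in_poset conditions extends D"
    using dense_level dense_domain dense_range unfolding \<D>_def E_def DA_def DB_def by blast
  moreover have "conditions \<noteq> {}"
    using empty_condition by blast
  ultimately obtain G where G: "poset_filter conditions extends G" "\<forall>D\<in>\<D>. G \<inter> D \<noteq> {}"
    using MA_sigma_centered_lepoll[OF MA conditions_lepoll _ partial_order_on_conditions
        sigma_centered_conditions]
    by blast
  have "G \<inter> E k \<noteq> {}" for k
    using G(2) I(2) unfolding \<D>_def by blast
  moreover have "G \<inter> DA x \<noteq> {}" if "\<alpha> \<in> I" "x \<in> A \<alpha>" for \<alpha> x
    using G(2) that unfolding \<D>_def by blast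
  moreover have "G \<inter> DB y \<noteq> {}" if "\<alpha> \<in> I" "y \<in> B \<alpha>" for \<alpha> y
    using G(2) that unfolding \<D>_def by blast
  ultimately show ?thesis
    using G(1) unfolding E_def DA_def DB_def by blast
qed

lemma homeomorphism_from_generic_filter:
  assumes G: "poset_filter conditions extends G"
    and levels: "\<forall>k. \<exists>p\<in>G. k \<le> level p"
    and domains: "\<forall>\<alpha>\<in>I. \<forall>x\<in>A \<alpha>. \<exists>p\<in>G. x \<in> Domain (pairs p)"
    and ranges: "\<forall>\<alpha>\<in>I. \<forall>y\<in>B \<alpha>. \<exists>p\<in>G. y \<in> Range (pairs p)"
  shows "\<exists>f. homeomorphic_map cantor_space cantor_space f \<and> (\<forall>\<alpha>\<in>I. f ` A \<alpha> = B \<alpha>)"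
proof -
  have G_cond: "p \<in> conditions" if "p \<in> G" for p
    using G that by (auto simp: poset_filter_def)
  have directed: "\<exists>r\<in>G. extends r p \<and> extends r q" if "p \<in> G" "q \<in> G" for p q
    using G that by (simp add: poset_filter_def)
  have unbounded: "\<exists>p\<in>G. j < level p" for j
    using levels by (meson Suc_le_eq)
  obtain F where F: "homeomorphic_map cantor_space cantor_space F"
    "\<forall>p\<in>G. \<forall>x. cantor_prefix (level p) (F x) = perm p (cantor_prefix (level p) x)"
    using coherent_permutations_homeomorphism[of G level perm] unbounded directed
      conditionsD(1)[OF G_cond] unfolding extends_def by blast
  have F_pairs: "F x = y" if "p \<in> G" "(x, y) \<in> pairs p" for p x y
  proof (rule cantor_eqI)
    fix j
    obtain q where "q \<in> G" "j < level q"
      using unbounded by blast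
    then obtain r where r: "r \<in> G" "extends r p" "extends r q"
      using directed \<open>p \<in> G\<close> by blast
    then have "(x, y) \<in> pairs r" "j < level r"
      using that(2) \<open>j < level q\<close> by (auto simp: extends_def refines_def)
    then have "cantor_prefix (level r) (F x) = cantor_prefix (level r) y"
      using F(2) r(1) conditionsD(6)[OF G_cond[OF r(1)]] by simp
    then show "\<exists>m>j. cantor_prefix m (F x) = cantor_prefix m y"
      using \<open>j < level r\<close> by blast
  qed
  let ?H = "\<Union>p\<in>G. pairs p"
  have "F x = y \<and> matched x y" if "(x, y) \<in> ?H" for x y
    using that F_pairs conditionsD(5)[OF G_cond] by blast
  moreover have "A \<alpha> \<subseteq> Domain ?H" "B \<alpha> \<subseteq> Range ?H" if "\<alpha> \<in> I" for \<alpha>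
    using domains ranges that by blast+
  ultimately have "F ` A \<alpha> = B \<alpha>" if "\<alpha> \<in> I" for \<alpha>
    using that by (rule image_eq_if_matching)
  then show ?thesis
    using F(1) by blast
qed

end

theorem theorem2p1:
  fixes I :: "'i set"
    and A B :: "'i \<Rightarrow> (nat \<Rightarrow> bool) set"
  assumes MA: "MA_sigma_centered"
    and kappa: "I \<prec> continuum_set"
    and A_count: "\<forall>\<alpha>\<in>I. countable (A \<alpha>)"
    and A_dense: "\<forall>\<alpha>\<in>I. cantor_space closure_of (A \<alpha>) = topspace cantor_space"
    and B_count: "\<forall>\<alpha>\<in>I. countable (B \<alpha>)"
    and B_dense: "\<forall>\<alpha>\<in>I. cantor_space closure_of (B \<alpha>) = topspace cantor_space"
    and A_disj: "\<forall>\<alpha>\<in>I. \<forall>\<beta>\<in>I. \<alpha> \<noteq> \<beta> \<longrightarrow> A \<alpha> \<inter> A \<beta> = {}"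
    and B_disj: "\<forall>\<alpha>\<in>I. \<forall>\<beta>\<in>I. \<alpha> \<noteq> \<beta> \<longrightarrow> B \<alpha> \<inter> B \<beta> = {}"
  shows "\<exists>f. homeomorphic_map cantor_space cantor_space f \<and> (\<forall>\<alpha>\<in>I. f ` (A \<alpha>) = B \<alpha>)"
proof (cases "I = {}")
  case True
  then show ?thesis
    by (intro exI[of _ id]) simp
next
  case False
  have "disjoint_family_on A I" "disjoint_family_on B I"
    using A_disj B_disj by (simp_all add: disjoint_family_on_def)
  moreover obtain index_A index_B :: "(nat \<Rightarrow> bool) \<Rightarrow> nat"
    where "\<forall>\<alpha>\<in>I. inj_on index_A (A \<alpha>)" "\<forall>\<alpha>\<in>I. inj_on index_B (B \<alpha>)"
    using countable_disjoint_family_index A_count B_count calculation by metis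
  ultimately interpret dense_families I A B index_A index_B
    using A_dense B_dense by unfold_locales simp_all
  show ?thesis
    using generic_filter_exists[OF MA kappa False] A_count B_count homeomorphism_from_generic_filter
    by blast
qed

end
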